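(* Let $R\ge1$, $\mathbf{x}$ a vector of pairwise distinct reals, $\mathbf{c}\in\mathbb{R}^R$, $B=B(\mathbf{x},\mathbf{c})$, and let $\mathbf{u}=\mathbf{v}+i\mathbf{w}$ (with $\mathbf{v},\mathbf{w}\in\mathbb{R}^R$) be an eigenvector of $B$ for the eigenvalue $i\mu$, $\mu\in\mathbb{R}$. Then for every $1\le n\le R$, $$\mu^2v_n^2=\sum_{m=1}^R b_{n,m}^2w_m^2+2c_n^2\sum_{\substack{1\le m\le R\\ m\ne n}} a_{n,m}\,w_m\,(\mu v_m-b_{m,n}w_n).$$ Moreover, if $\mu\ne0$ then $\Vert\mathbf{v}\Vert=\Vert\mathbf{w}\Vert$; if $\mu=0$ then $\det B=0$ and the kernel of $B$ contains a nonzero real vector.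
   Context: $a_{m,m}=0$ and $a_{m,n}=\frac{1}{x_m-x_n}$ for $m\ne n$; $B(\mathbf{x},\mathbf{c})$ is the $R\times R$ matrix with entries $b_{m,n}=c_mc_na_{m,n}$. $\Vert\cdot\Vert$ is the Euclidean norm. *)

theory Defs
  imports "HOL-Analysis.Analysis"
begin

definition Amat :: "real ^ 'n \<Rightarrow> real ^ 'n ^ 'n" where
  "Amat x = (\<chi> m n. if m = n then 0 else 1 / (x $ m - x $ n))"

definition Bmat :: "real ^ 'n \<Rightarrow> real ^ 'n \<Rightarrow> real ^ 'n ^ 'n" where
  "Bmat x c = (\<chi> m n. c $ m * c $ n * Amat x $ m $ n)"

definition cmat :: "real ^ 'n ^ 'm \<Rightarrow> complex ^ 'n ^ 'm" where
  "cmat M = (\<chi> i j. complex_of_real (M $ i $ j))"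

end

theory Submission
  imports Defs
begin

text \<open>Splitting \<open>B u = i\<mu> u\<close> into real and imaginary parts gives \<open>B w = \<mu> v\<close> and
  \<open>B v = -\<mu> w\<close>. Since \<open>B\<close> is skew-symmetric, \<open>\<mu> \<parallel>v\<parallel>\<^sup>2 = v \<bullet> B w = -(B v) \<bullet> w = \<mu> \<parallel>w\<parallel>\<^sup>2\<close>,
  and for \<open>\<mu> = 0\<close> one of \<open>v\<close>, \<open>w\<close> is a nonzero real kernel vector. The row identity comes from
  squaring \<open>\<mu> v\<^sub>n = \<Sum>\<^sub>m b\<^sub>n\<^sub>m w\<^sub>m\<close>: the off-diagonal products \<open>b\<^sub>n\<^sub>m b\<^sub>n\<^sub>k\<close> are rewritten by the
  partial fraction identity \<open>a\<^sub>n\<^sub>m a\<^sub>n\<^sub>k = a\<^sub>n\<^sub>m a\<^sub>m\<^sub>k + a\<^sub>n\<^sub>k a\<^sub>k\<^sub>m\<close>, after which the inner sums over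
  \<open>k\<close> are again rows of \<open>B w = \<mu> v\<close>.\<close>

lemma cmat_eigenvector_re_im:
  fixes M :: "real ^ 'n ^ 'n" and u :: "complex ^ 'n"
  assumes eig: "cmat M *v u = (\<i> * complex_of_real \<mu>) *s u"
    and u_vw: "\<And>i. u $ i = complex_of_real (v $ i) + \<i> * complex_of_real (w $ i)"
  shows "M *v w = \<mu> *s v" and "M *v v = - \<mu> *s w"
proof -
  have row: "(\<Sum>j\<in>UNIV. complex_of_real (M $ i $ j) * u $ j) = \<i> * complex_of_real \<mu> * u $ i" for i
    using arg_cong[OF eig, of "\<lambda>y. y $ i"] by (simp add: matrix_vector_mult_def cmat_def)
  show "M *v w = \<mu> *s v"
    unfolding vec_eq_iff
  proof
    show "(M *v w) $ i = (\<mu> *s v) $ i" for i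
      using arg_cong[OF row[of i], of Im] by (simp add: matrix_vector_mult_def u_vw Im_sum)
  qed
  show "M *v v = - \<mu> *s w"
    unfolding vec_eq_iff
  proof
    show "(M *v v) $ i = (- \<mu> *s w) $ i" for i
      using arg_cong[OF row[of i], of Re] by (simp add: matrix_vector_mult_def u_vw Re_sum)
  qed
qed

lemma skew_symmetric_eigenpair_norm_eq:
  fixes M :: "real ^ 'n ^ 'n"
  assumes skew: "transpose M = - M"
    and Mw: "M *v w = \<mu> *s v" and Mv: "M *v v = - \<mu> *s w" and "\<mu> \<noteq> 0"
  shows "norm v = norm w"
proof -
  have "v v* M = (- M) *v v"
    by (metis skew transpose_matrix_vector)
  also have "\<dots> = - (M *v v)"
    by (simp add: vec_eq_iff matrix_vector_mult_def sum_negf)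
  finally have Mt: "v v* M = - (M *v v)" .
  have "\<mu> * (v \<bullet> v) = v \<bullet> (M *v w)"
    by (simp add: Mw scalar_mult_eq_scaleR)
  also have "\<dots> = (transpose M *v v) \<bullet> w"
    by (simp add: dot_lmul_matrix[symmetric])
  also have "\<dots> = \<mu> * (w \<bullet> w)"
    by (simp add: Mt Mv scalar_mult_eq_scaleR)
  finally show ?thesis
    using \<open>\<mu> \<noteq> 0\<close> by (simp add: norm_eq_sqrt_inner)
qed

lemma transpose_Bmat: "transpose (Bmat x c) = - Bmat x c"
  by (simp add: vec_eq_iff transpose_def Bmat_def Amat_def divide_simps) (auto simp: field_simps)

lemma Amat_partial_fractions:
  assumes x: "inj (($) x)" and "m \<noteq> n" "k \<noteq> n" "m \<noteq> k"
  shows "Amat x $ n $ m * Amat x $ n $ k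
           = Amat x $ n $ m * Amat x $ m $ k + Amat x $ n $ k * Amat x $ k $ m"
proof -
  have "x $ n - x $ m \<noteq> 0" "x $ n - x $ k \<noteq> 0" "x $ m - x $ k \<noteq> 0" "x $ k - x $ m \<noteq> 0"
    using assms by (auto dest: injD)
  then show ?thesis
    using assms by (simp add: Amat_def divide_simps) (simp add: algebra_simps)
qed

text \<open>The case distinctions make the identity hold for all \<open>m\<close>, \<open>k\<close>, including the degenerate
  ones where the partial fraction identity fails, so that it can be summed over \<open>UNIV \<times> UNIV\<close>.\<close>

lemma Bmat_row_product:
  assumes x: "inj (($) x)"
  shows "Bmat x c $ n $ m * Bmat x c $ n $ k
           = (if m = k then (Bmat x c $ n $ m)\<^sup>2 else 0)
             + (c $ n)\<^sup>2 * (if k = n then 0 else Amat x $ n $ m * Bmat x c $ m $ k)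
             + (c $ n)\<^sup>2 * (if m = n then 0 else Amat x $ n $ k * Bmat x c $ k $ m)"
proof (cases "m = k \<or> m = n \<or> k = n")
  case True
  then show ?thesis
    by (auto simp: Bmat_def Amat_def power2_eq_square field_simps)
next
  case False
  then have "Bmat x c $ n $ m * Bmat x c $ n $ k
      = (c $ n)\<^sup>2 * c $ m * c $ k * (Amat x $ n $ m * Amat x $ n $ k)"
    by (simp add: Bmat_def power2_eq_square)
  also have "\<dots> = (c $ n)\<^sup>2 * c $ m * c $ k
                    * (Amat x $ n $ m * Amat x $ m $ k + Amat x $ n $ k * Amat x $ k $ m)"
    using False Amat_partial_fractions[OF x, of m n k] by simp
  finally show ?thesis
    using False by (simp add: Bmat_def algebra_simps)
qed

lemma Bmat_eigen_row_identity:
  assumes x: "inj (($) x)" and Bw: "Bmat x c *v w = \<mu> *s v"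
  shows "\<mu>\<^sup>2 * (v $ n)\<^sup>2 =
           (\<Sum>m\<in>UNIV. (Bmat x c $ n $ m)\<^sup>2 * (w $ m)\<^sup>2)
           + 2 * (c $ n)\<^sup>2 * (\<Sum>m\<in>UNIV - {n}. Amat x $ n $ m * w $ m *
                (\<mu> * v $ m - Bmat x c $ m $ n * w $ n))"
proof -
  let ?A = "Amat x" and ?B = "Bmat x c"
  have row: "(\<Sum>k\<in>UNIV. ?B $ m $ k * w $ k) = \<mu> * v $ m" for m
    using Bw by (simp add: vec_eq_iff matrix_vector_mult_def)
  have row_off_n: "(\<Sum>k\<in>UNIV. if k = n then 0 else ?B $ m $ k * w $ k)
                     = \<mu> * v $ m - ?B $ m $ n * w $ n" for m
    using row[of m] by (simp add: sum.If_cases Compl_eq_Diff_UNIV sum_diff1)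
  define T where "T = (\<Sum>m\<in>UNIV. \<Sum>k\<in>UNIV.
                        (c $ n)\<^sup>2 * (if k = n then 0 else ?A $ n $ m * ?B $ m $ k) * (w $ m * w $ k))"
  have T_swap: "(\<Sum>m\<in>UNIV. \<Sum>k\<in>UNIV.
                   (c $ n)\<^sup>2 * (if m = n then 0 else ?A $ n $ k * ?B $ k $ m) * (w $ m * w $ k)) = T"
    unfolding T_def by (subst sum.swap) (simp add: mult_ac)
  have "\<mu>\<^sup>2 * (v $ n)\<^sup>2 = (\<Sum>m\<in>UNIV. ?B $ n $ m * w $ m)\<^sup>2"
    by (simp add: row power_mult_distrib)
  also have "\<dots> = (\<Sum>m\<in>UNIV. \<Sum>k\<in>UNIV. (?B $ n $ m * ?B $ n $ k) * (w $ m * w $ k))"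
    by (simp add: power2_eq_square sum_product algebra_simps)
  also have "\<dots> = (\<Sum>m\<in>UNIV. (?B $ n $ m)\<^sup>2 * (w $ m)\<^sup>2) + T + T"
    unfolding Bmat_row_product[OF x] distrib_right sum.distrib T_swap
    by (simp add: T_def power2_eq_square if_distrib if_distribR)
  also have "T = (\<Sum>m\<in>UNIV. (c $ n)\<^sup>2 * ?A $ n $ m * w $ m
                    * (\<Sum>k\<in>UNIV. if k = n then 0 else ?B $ m $ k * w $ k))"
    unfolding T_def sum_distrib_left by (intro sum.cong refl) simp
  also have "\<dots> = (c $ n)\<^sup>2 * (\<Sum>m\<in>UNIV. ?A $ n $ m * w $ m * (\<mu> * v $ m - ?B $ m $ n * w $ n))"
    by (simp add: row_off_n sum_distrib_left mult_ac)
  also have "\<dots> = (c $ n)\<^sup>2 * (\<Sum>m\<in>UNIV - {n}. ?A $ n $ m * w $ m * (\<mu> * v $ m - ?B $ m $ n * w $ n))"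
    by (simp add: sum.remove[of UNIV n] Amat_def)
  finally show ?thesis
    by simp
qed

lemma det_eq_0_if_nontrivial_kernel:
  fixes A :: "real ^ 'n ^ 'n"
  assumes "z \<noteq> 0" and "A *v z = 0"
  shows "det A = 0"
proof (rule ccontr)
  assume "det A \<noteq> 0"
  then have "inj ((*v) A)"
    using invertible_det_nz inj_matrix_vector_mult by blast
  with assms show False
    by (metis injD matrix_vector_mult_0_right)
qed

theorem lemma6:
  fixes x c v w :: "real ^ 'n" and u :: "complex ^ 'n" and \<mu> :: real
  assumes distinct: "inj (\<lambda>i. x $ i)"
    and u_nz: "u \<noteq> 0"
    and eig: "cmat (Bmat x c) *v u = (\<i> * complex_of_real \<mu>) *s u"
    and u_vw: "\<And>i. u $ i = complex_of_real (v $ i) + \<i> * complex_of_real (w $ i)"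
  shows "(\<forall>n. \<mu>\<^sup>2 * (v $ n)\<^sup>2 =
              (\<Sum>m\<in>UNIV. (Bmat x c $ n $ m)\<^sup>2 * (w $ m)\<^sup>2)
              + 2 * (c $ n)\<^sup>2 * (\<Sum>m\<in>UNIV - {n}. Amat x $ n $ m * w $ m *
                   (\<mu> * v $ m - Bmat x c $ m $ n * w $ n)))
         \<and> (\<mu> \<noteq> 0 \<longrightarrow> norm v = norm w)
         \<and> (\<mu> = 0 \<longrightarrow> det (Bmat x c) = 0 \<and> (\<exists>z :: real ^ 'n. z \<noteq> 0 \<and> Bmat x c *v z = 0))"
proof (intro conjI impI)
  have Bw: "Bmat x c *v w = \<mu> *s v" and Bv: "Bmat x c *v v = - \<mu> *s w"
    using cmat_eigenvector_re_im[OF eig u_vw] by auto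
  show "\<forall>n. \<mu>\<^sup>2 * (v $ n)\<^sup>2 =
              (\<Sum>m\<in>UNIV. (Bmat x c $ n $ m)\<^sup>2 * (w $ m)\<^sup>2)
              + 2 * (c $ n)\<^sup>2 * (\<Sum>m\<in>UNIV - {n}. Amat x $ n $ m * w $ m *
                   (\<mu> * v $ m - Bmat x c $ m $ n * w $ n))"
    using Bmat_eigen_row_identity[OF distinct Bw] by blast
  show "norm v = norm w" if "\<mu> \<noteq> 0"
    using skew_symmetric_eigenpair_norm_eq[OF transpose_Bmat Bw Bv that] .
  assume "\<mu> = 0"
  moreover have "v \<noteq> 0 \<or> w \<noteq> 0"
    using u_nz by (auto simp: vec_eq_iff u_vw)
  ultimately show "\<exists>z. z \<noteq> 0 \<and> Bmat x c *v z = 0"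
    using Bv Bw by auto
  then show "det (Bmat x c) = 0"
    using det_eq_0_if_nontrivial_kernel by blast
qed

end
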